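(* Let $\{(X_n,M_n,\cdot)\}_{n\in\mathbb N}$ be a sequence of nonempty compact non-Archimedean fuzzy metric spaces with the product $t$-norm $\cdot$, satisfying: (1) there exists a nondecreasing left-continuous function $C:(0,\infty)\to(0,1]$ with $0<C(s)\le\mathrm{diam}_s(X_n)$ for all $s>0$ and all $n$; (2) for every $t>0$ and $0<\varepsilon<1$ there is $N(\varepsilon,t)\in\mathbb N$ with $\mathrm{Cov}(X_n,\varepsilon,t)\le N(\varepsilon,t)$ for all $n$; (3) for every $t>0$ and $0<\varepsilon<1$, with $N=N(\varepsilon,t)$, there exist, for each $n$, a $(t,\varepsilon)$-net $\{x_i^n\}_{i=1}^N$ in $X_n$ such that for all $n,m$, all $s>t$ and all $i,j\in\{1,\dots,N\}$: if $M_n(x_i^n,x_j^n,s)<M_m(x_i^m,x_j^m,s)$ then $\dfrac{M_n(x_i^n,x_j^n,s)}{M_m(x_i^m,x_j^m,s)}\ge\dfrac{M_n(x_i^n,x_j^n,t)}{M_m(x_i^m,x_j^m,t)}$. Then for every $t>0$ and $0<\varepsilon<1$ there is a subsequence $\{X_{n_k}\}_k$ with $M_{GH}(X_{n_j},X_{n_k},t)>(1-\varepsilon)^2$ for all $j,k$; and consequently $\{(X_n,M_n,\cdot)\}_n$ has a Cauchy subsequence with respect to $M_{GH}$.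
   Context: A fuzzy metric space $(X,M,\cdot)$ with the product $t$-norm: $M:X\times X\times[0,\infty)\to[0,1]$ with, for all $x,y,z$ and $t,s>0$: (KM1) $M(x,y,0)=0$; (KM2) $M(x,y,t)=1$ for all $t>0$ iff $x=y$; (KM3) $M(x,y,t)=M(y,x,t)$; (KM4) $M(x,y,t)\cdot M(y,z,s)\le M(x,z,t+s)$; (KM5) $M(x,y,\cdot)$ left continuous on $[0,\infty)$. Non-Archimedean: $M(x,z,\max\{t,s\})\ge M(x,y,t)\cdot M(y,z,s)$. Balls $B(x,\varepsilon,t)=\{y: M(x,y,t)>1-\varepsilon\}$ generate the topology; "compact" refers to it. $H_M(A,B,t)=\min\{\inf_{a\in A}\sup_{b\in B}M(a,b,t),\ \inf_{b\in B}\sup_{a\in A}M(a,b,t)\}$ for nonempty compact $A,B$. A fuzzy metric on the disjoint union $X\sqcup Y$ is admissible if it restricts to the given ones on $X$ and $Y$; $M_{GH}(X,Y,t)=\sup\{H_M(X,Y,t): M$ admissible non-Archimedean fuzzy metric on $X\sqcup Y$ with the same $t$-norm$\}$. A sequence $(X_n)$ is Cauchy w.r.t. $M_{GH}$ if for every $t>0$, $0<\varepsilon<1$ there is $n_0$ with $M_{GH}(X_n,X_m,t)>1-\varepsilon$ for all $n,m\ge n_0$. A family $\{x_i\}_{i=1}^N$ is a $(t,\varepsilon)$-net in $X$ if each $x\in X$ has some $i$ with $M(x,x_i,t)>1-\varepsilon$. $\mathrm{Cov}(X,\varepsilon,t)$ is the minimal cardinality of $C\subseteq X$ with $X=\bigcup_{c\in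 C}B(c,\varepsilon,t)$. $\mathrm{diam}_s(X)=\inf\{M(x,y,s):x,y\in X\}$. *)

theory Defs
  imports "HOL-Analysis.Analysis"
begin

text \<open>A fuzzy metric (w.r.t. the product t-norm) on the carrier S. The time
  parameter ranges over [0,\<infinity>); values at negative times are irrelevant.\<close>
definition fuzzy_metric :: "'a set \<Rightarrow> ('a \<Rightarrow> 'a \<Rightarrow> real \<Rightarrow> real) \<Rightarrow> bool" where
  "fuzzy_metric S M \<longleftrightarrow>
     (\<forall>x\<in>S. \<forall>y\<in>S. \<forall>t\<ge>0. 0 \<le> M x y t \<and> M x y t \<le> 1) \<and>
     (\<forall>x\<in>S. \<forall>y\<in>S. M x y 0 = 0) \<and>
     (\<forall>x\<in>S. \<forall>y\<in>S. (\<forall>t>0. M x y t = 1) \<longleftrightarrow> x = y) \<and>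
     (\<forall>x\<in>S. \<forall>y\<in>S. \<forall>t\<ge>0. M x y t = M y x t) \<and>
     (\<forall>x\<in>S. \<forall>y\<in>S. \<forall>z\<in>S. \<forall>t>0. \<forall>s>0. M x y t * M y z s \<le> M x z (t + s)) \<and>
     (\<forall>x\<in>S. \<forall>y\<in>S. \<forall>t>0. ((\<lambda>s. M x y s) \<longlongrightarrow> M x y t) (at_left t))"

definition non_archimedean :: "'a set \<Rightarrow> ('a \<Rightarrow> 'a \<Rightarrow> real \<Rightarrow> real) \<Rightarrow> bool" where
  "non_archimedean S M \<longleftrightarrow>
     (\<forall>x\<in>S. \<forall>y\<in>S. \<forall>z\<in>S. \<forall>t>0. \<forall>s>0. M x y t * M y z s \<le> M x z (max t s))"

definition fball :: "'a set \<Rightarrow> ('a \<Rightarrow> 'a \<Rightarrow> real \<Rightarrow> real) \<Rightarrow> 'a \<Rightarrow> real \<Rightarrow> real \<Rightarrow> 'a set" where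
  "fball S M x \<epsilon> t = {y \<in> S. M x y t > 1 - \<epsilon>}"

definition fopen :: "'a set \<Rightarrow> ('a \<Rightarrow> 'a \<Rightarrow> real \<Rightarrow> real) \<Rightarrow> 'a set \<Rightarrow> bool" where
  "fopen S M U \<longleftrightarrow> U \<subseteq> S \<and>
     (\<forall>x\<in>U. \<exists>\<epsilon> t. 0 < \<epsilon> \<and> \<epsilon> < 1 \<and> 0 < t \<and> fball S M x \<epsilon> t \<subseteq> U)"

definition fcompact :: "'a set \<Rightarrow> ('a \<Rightarrow> 'a \<Rightarrow> real \<Rightarrow> real) \<Rightarrow> bool" where
  "fcompact S M \<longleftrightarrow>
     (\<forall>\<U>. (\<forall>U\<in>\<U>. fopen S M U) \<and> S \<subseteq> \<Union>\<U> \<longrightarrow>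
        (\<exists>\<F>\<subseteq>\<U>. finite \<F> \<and> S \<subseteq> \<Union>\<F>))"

definition fdiam :: "'a set \<Rightarrow> ('a \<Rightarrow> 'a \<Rightarrow> real \<Rightarrow> real) \<Rightarrow> real \<Rightarrow> real" where
  "fdiam S M s = Inf {M x y s | x y. x \<in> S \<and> y \<in> S}"

definition fcov :: "'a set \<Rightarrow> ('a \<Rightarrow> 'a \<Rightarrow> real \<Rightarrow> real) \<Rightarrow> real \<Rightarrow> real \<Rightarrow> nat" where
  "fcov S M \<epsilon> t = (LEAST k. \<exists>C. C \<subseteq> S \<and> finite C \<and> card C = k \<and>
                               S = (\<Union>c\<in>C. fball S M c \<epsilon> t))"

definition HM :: "('b \<Rightarrow> 'b \<Rightarrow> real \<Rightarrow> real) \<Rightarrow> 'b set \<Rightarrow> 'b set \<Rightarrow> real \<Rightarrow> real" where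
  "HM M A B t = min (Inf ((\<lambda>a. Sup ((\<lambda>b. M a b t) ` B)) ` A))
                    (Inf ((\<lambda>b. Sup ((\<lambda>a. M a b t) ` A)) ` B))"

definition admissible ::
  "'a set \<Rightarrow> ('a \<Rightarrow> 'a \<Rightarrow> real \<Rightarrow> real) \<Rightarrow> 'b set \<Rightarrow> ('b \<Rightarrow> 'b \<Rightarrow> real \<Rightarrow> real)
   \<Rightarrow> ('a + 'b \<Rightarrow> 'a + 'b \<Rightarrow> real \<Rightarrow> real) \<Rightarrow> bool" where
  "admissible X MX Y MY M \<longleftrightarrow>
     fuzzy_metric (Inl ` X \<union> Inr ` Y) M \<and> non_archimedean (Inl ` X \<union> Inr ` Y) M \<and>
     (\<forall>x\<in>X. \<forall>y\<in>X. \<forall>t\<ge>0. M (Inl x) (Inl y) t = MX x y t) \<and>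
     (\<forall>x\<in>Y. \<forall>y\<in>Y. \<forall>t\<ge>0. M (Inr x) (Inr y) t = MY x y t)"

definition MGH ::
  "'a set \<Rightarrow> ('a \<Rightarrow> 'a \<Rightarrow> real \<Rightarrow> real) \<Rightarrow> 'b set \<Rightarrow> ('b \<Rightarrow> 'b \<Rightarrow> real \<Rightarrow> real) \<Rightarrow> real \<Rightarrow> real" where
  "MGH X MX Y MY t = Sup {HM M (Inl ` X) (Inr ` Y) t | M. admissible X MX Y MY M}"

definition GH_Cauchy :: "(nat \<Rightarrow> 'a set) \<Rightarrow> (nat \<Rightarrow> 'a \<Rightarrow> 'a \<Rightarrow> real \<Rightarrow> real) \<Rightarrow> bool" where
  "GH_Cauchy X M \<longleftrightarrow> (\<forall>t>0. \<forall>\<epsilon>. 0 < \<epsilon> \<and> \<epsilon> < 1 \<longrightarrow>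
     (\<exists>n0. \<forall>n\<ge>n0. \<forall>m\<ge>n0. MGH (X n) (M n) (X m) (M m) t > 1 - \<epsilon>))"

definition is_net :: "'a set \<Rightarrow> ('a \<Rightarrow> 'a \<Rightarrow> real \<Rightarrow> real) \<Rightarrow> (nat \<Rightarrow> 'a) \<Rightarrow> nat \<Rightarrow> real \<Rightarrow> real \<Rightarrow> bool" where
  "is_net S M x N t \<epsilon> \<longleftrightarrow> (\<forall>i\<in>{1..N}. x i \<in> S) \<and>
     (\<forall>y\<in>S. \<exists>i\<in>{1..N}. M y (x i) t > 1 - \<epsilon>)"

end

theory Submission
  imports Defs "HOL-Library.Diagonal_Subsequence"
begin

(* Fix t0 > 0 and take the nets of condition (3) at time t0.  By pigeonhole, some subsequence
   has all net values M_n(x_i, x_j, t0) comparable up to the factor kappa^2, kappa = 1 - eps/2;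
   the ratio condition carries this comparability to every time s > t0, and below t0 the
   diameter bound C controls all values.  This is exactly what is needed to glue X_n and X_m
   along their nets by the non-Archimedean fuzzy metric
     M(x, y, s) = max_i M_n(x, x_i, s) * K(s) * M_m(y, y_i, s),
   with K = kappa * C on (0, t0] and K = kappa after t0.  Every point lies within 1 - eps of a
   net point, so the Hausdorff value at times s > t0 is at least (1 - eps) * kappa > (1 - eps)^2.
   A diagonal argument over t0, eps -> 0 then produces a Cauchy subsequence. *)

lemma fuzzy_metricD:
  assumes "fuzzy_metric S M"
  shows fuzzy_metric_range: "\<forall>x\<in>S. \<forall>y\<in>S. \<forall>t\<ge>0. 0 \<le> M x y t \<and> M x y t \<le> 1"
    and fuzzy_metric_at_0_all: "\<forall>x\<in>S. \<forall>y\<in>S. M x y 0 = 0"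
    and fuzzy_metric_eq_1_all: "\<forall>x\<in>S. \<forall>y\<in>S. (\<forall>t>0. M x y t = 1) \<longleftrightarrow> x = y"
    and fuzzy_metric_commute_all: "\<forall>x\<in>S. \<forall>y\<in>S. \<forall>t\<ge>0. M x y t = M y x t"
    and fuzzy_metric_left_continuous_all:
      "\<forall>x\<in>S. \<forall>y\<in>S. \<forall>t>0. (M x y \<longlongrightarrow> M x y t) (at_left t)"
  using assms unfolding fuzzy_metric_def by simp_all

lemma fuzzy_metric_nonneg: "fuzzy_metric S M \<Longrightarrow> x \<in> S \<Longrightarrow> y \<in> S \<Longrightarrow> 0 \<le> t \<Longrightarrow> 0 \<le> M x y t"
  using fuzzy_metric_range by blast

lemma fuzzy_metric_le_1: "fuzzy_metric S M \<Longrightarrow> x \<in> S \<Longrightarrow> y \<in> S \<Longrightarrow> 0 \<le> t \<Longrightarrow> M x y t \<le> 1"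
  using fuzzy_metric_range by blast

lemma fuzzy_metric_at_0: "fuzzy_metric S M \<Longrightarrow> x \<in> S \<Longrightarrow> y \<in> S \<Longrightarrow> M x y 0 = 0"
  using fuzzy_metric_at_0_all by blast

lemma fuzzy_metric_eq_1_iff:
  assumes "fuzzy_metric S M" "x \<in> S" "y \<in> S"
  shows "(\<forall>t>0. M x y t = 1) \<longleftrightarrow> x = y"
  using fuzzy_metric_eq_1_all[OF assms(1)] assms(2,3) by simp

lemma fuzzy_metric_self:
  assumes "fuzzy_metric S M" "x \<in> S" "0 < t"
  shows "M x x t = 1"
  using fuzzy_metric_eq_1_iff[OF assms(1,2,2)] assms(3) by simp

lemma fuzzy_metric_commute: "fuzzy_metric S M \<Longrightarrow> x \<in> S \<Longrightarrow> y \<in> S \<Longrightarrow> 0 \<le> t \<Longrightarrow> M x y t = M y x t"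
  using fuzzy_metric_commute_all by blast

lemma fuzzy_metric_left_continuous:
  "fuzzy_metric S M \<Longrightarrow> x \<in> S \<Longrightarrow> y \<in> S \<Longrightarrow> 0 < t \<Longrightarrow> (M x y \<longlongrightarrow> M x y t) (at_left t)"
  using fuzzy_metric_left_continuous_all by blast

lemma non_archimedeanD:
  "non_archimedean S M \<Longrightarrow> x \<in> S \<Longrightarrow> y \<in> S \<Longrightarrow> z \<in> S \<Longrightarrow> 0 < t \<Longrightarrow> 0 < s \<Longrightarrow>
    M x y t * M y z s \<le> M x z (max t s)"
  unfolding non_archimedean_def by blast

lemma non_archimedean_mono:
  assumes "non_archimedean S M" and diag: "\<And>z u. z \<in> S \<Longrightarrow> 0 < u \<Longrightarrow> M z z u = 1"
    and "x \<in> S" "y \<in> S" "0 < t" "t \<le> t'"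
  shows "M x y t \<le> M x y t'"
  using non_archimedeanD[OF assms(1,3,4,4,5), of t'] diag[of y t'] assms(4-6) by (simp add: max_def)

lemma non_archimedean_triangle:
  assumes "non_archimedean S M" and diag: "\<And>z u. z \<in> S \<Longrightarrow> 0 < u \<Longrightarrow> M z z u = 1"
    and "x \<in> S" "y \<in> S" "z \<in> S" "0 < t" "0 < s"
  shows "M x y t * M y z s \<le> M x z (t + s)"
proof -
  have "M x z (max t s) \<le> M x z (t + s)"
    by (rule non_archimedean_mono[OF assms(1,2,3,5)]) (use assms(6,7) in auto)
  with non_archimedeanD[OF assms(1,3-7)] show ?thesis by linarith
qed

lemma fuzzy_non_archimedean_mono:
  assumes "fuzzy_metric S M" "non_archimedean S M" "x \<in> S" "y \<in> S" "0 < t" "t \<le> t'"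
  shows "M x y t \<le> M x y t'"
  using non_archimedean_mono[OF assms(2) fuzzy_metric_self[OF assms(1)] assms(3-6)] .

lemma is_net_mono:
  assumes "fuzzy_metric S M" "non_archimedean S M" "is_net S M x N t \<epsilon>" "0 < t" "t \<le> s"
  shows "is_net S M x N s \<epsilon>"
  unfolding is_net_def
proof (intro conjI ballI)
  show "x i \<in> S" if "i \<in> {1..N}" for i using assms(3) that unfolding is_net_def by blast
  fix y assume "y \<in> S"
  then obtain i where i: "i \<in> {1..N}" "1 - \<epsilon> < M y (x i) t" "x i \<in> S"
    using assms(3) unfolding is_net_def by blast
  have "M y (x i) t \<le> M y (x i) s"
    by (rule fuzzy_non_archimedean_mono[OF assms(1,2) \<open>y \<in> S\<close> i(3) assms(4,5)])
  with i show "\<exists>i\<in>{1..N}. 1 - \<epsilon> < M y (x i) s" by force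
qed

lemma fdiam_le:
  assumes "fuzzy_metric S M" "x \<in> S" "y \<in> S" "0 \<le> t"
  shows "fdiam S M t \<le> M x y t"
  unfolding fdiam_def
  by (rule cInf_lower) (use assms fuzzy_metric_nonneg[OF assms(1)] in \<open>auto intro!: bdd_belowI[of _ 0]\<close>)

lemma tendsto_Max_finite:
  fixes f :: "'i \<Rightarrow> 'b \<Rightarrow> 'c::linorder_topology"
  assumes "finite I" "I \<noteq> {}" "\<And>i. i \<in> I \<Longrightarrow> (f i \<longlongrightarrow> l i) F"
  shows "((\<lambda>x. Max ((\<lambda>i. f i x) ` I)) \<longlongrightarrow> Max (l ` I)) F"
  using assms
proof (induction I rule: finite_ne_induct)
  case (insert i I)
  have "((\<lambda>x. max (f i x) (Max ((\<lambda>i. f i x) ` I))) \<longlongrightarrow> max (l i) (Max (l ` I))) F"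
    by (intro tendsto_max) (use insert in auto)
  then show ?case using insert by simp
qed simp

lemma le_INF_SUP:
  fixes f :: "'a \<Rightarrow> 'b \<Rightarrow> real"
  assumes "A \<noteq> {}" and bdd: "\<And>a. a \<in> A \<Longrightarrow> bdd_above (f a ` B)"
    and witness: "\<And>a. a \<in> A \<Longrightarrow> \<exists>b\<in>B. c \<le> f a b"
  shows "c \<le> (INF a\<in>A. SUP b\<in>B. f a b)"
proof (rule cINF_greatest[OF assms(1)])
  fix a assume a: "a \<in> A"
  then obtain b where b: "b \<in> B" "c \<le> f a b" using witness by blast
  have "f a b \<le> (SUP b\<in>B. f a b)" by (rule cSUP_upper[OF b(1) bdd[OF a]])
  with b show "c \<le> (SUP b\<in>B. f a b)" by linarith
qed

lemma HM_geI:
  assumes "A \<noteq> {}" "B \<noteq> {}" and "\<And>a b. a \<in> A \<Longrightarrow> b \<in> B \<Longrightarrow> M a b t \<le> 1"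
    and "\<And>a. a \<in> A \<Longrightarrow> \<exists>b\<in>B. c \<le> M a b t" "\<And>b. b \<in> B \<Longrightarrow> \<exists>a\<in>A. c \<le> M a b t"
  shows "c \<le> HM M A B t"
proof -
  have "c \<le> (INF a\<in>A. SUP b\<in>B. M a b t)"
    by (rule le_INF_SUP) (use assms in \<open>auto intro!: bdd_aboveI[of _ 1]\<close>)
  moreover have "c \<le> (INF b\<in>B. SUP a\<in>A. M a b t)"
    by (rule le_INF_SUP[where f = "\<lambda>b a. M a b t"]) (use assms in \<open>auto intro!: bdd_aboveI[of _ 1]\<close>)
  ultimately show ?thesis unfolding HM_def by simp
qed

lemma HM_le_1:
  assumes "a0 \<in> A" "b0 \<in> B" and range: "\<And>a b. a \<in> A \<Longrightarrow> b \<in> B \<Longrightarrow> 0 \<le> M a b t \<and> M a b t \<le> 1"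
  shows "HM M A B t \<le> 1"
proof -
  have bdd: "bdd_above ((\<lambda>b. M a b t) ` B)" if "a \<in> A" for a
    using range that by (auto intro!: bdd_aboveI[of _ 1])
  have "0 \<le> (SUP b\<in>B. M a b t)" if "a \<in> A" for a
    using range[OF that assms(2)] cSUP_upper[OF assms(2) bdd[OF that]] by linarith
  then have "(INF a\<in>A. SUP b\<in>B. M a b t) \<le> (SUP b\<in>B. M a0 b t)"
    by (intro cINF_lower[OF _ assms(1)]) (auto intro!: bdd_belowI[of _ 0])
  also have "\<dots> \<le> 1"
    using range assms(1,2) by (intro cSUP_least) auto
  finally show ?thesis unfolding HM_def by linarith
qed

lemma HM_le_MGH:
  assumes adm: "admissible X MX Y MY M" and "x0 \<in> X" "y0 \<in> Y" "0 \<le> t"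
  shows "HM M (Inl ` X) (Inr ` Y) t \<le> MGH X MX Y MY t"
  unfolding MGH_def
proof (rule cSup_upper)
  show "HM M (Inl ` X) (Inr ` Y) t \<in> {HM M (Inl ` X) (Inr ` Y) t | M. admissible X MX Y MY M}"
    using adm by blast
  have "HM M' (Inl ` X) (Inr ` Y) t \<le> 1" if "admissible X MX Y MY M'" for M'
    using that assms(2-4)
    by (intro HM_le_1[of "Inl x0" _ "Inr y0"]) (auto simp: admissible_def fuzzy_metric_def)
  then show "bdd_above {HM M (Inl ` X) (Inr ` Y) t | M. admissible X MX Y MY M}"
    by (auto intro!: bdd_aboveI[of _ 1])
qed

(* K_XY and K_YX are what the triangle inequality needs for x \<rightarrow> y \<rightarrow> x' when the two
   links to y pass through different net points. *)
locale fuzzy_gluing =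
  fixes X :: "'a set" and MX :: "'a \<Rightarrow> 'a \<Rightarrow> real \<Rightarrow> real"
    and Y :: "'b set" and MY :: "'b \<Rightarrow> 'b \<Rightarrow> real \<Rightarrow> real"
    and I :: "'i set" and a :: "'i \<Rightarrow> 'a" and b :: "'i \<Rightarrow> 'b" and K :: "real \<Rightarrow> real"
  assumes fmX: "fuzzy_metric X MX" and naX: "non_archimedean X MX"
    and fmY: "fuzzy_metric Y MY" and naY: "non_archimedean Y MY"
    and finite_I: "finite I" and I_nonempty: "I \<noteq> {}"
    and a_in: "\<And>i. i \<in> I \<Longrightarrow> a i \<in> X" and b_in: "\<And>i. i \<in> I \<Longrightarrow> b i \<in> Y"
    and K_nonneg: "\<And>s. 0 \<le> K s" and K_le_1: "\<And>s. K s \<le> 1"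
    and K_mono: "\<And>s u. 0 < s \<Longrightarrow> s \<le> u \<Longrightarrow> K s \<le> K u"
    and K_left_continuous: "\<And>s. 0 < s \<Longrightarrow> (K \<longlongrightarrow> K s) (at_left s)"
    and K_less_1: "\<exists>s>0. K s < 1"
    and K_XY: "\<And>u i j. 0 < u \<Longrightarrow> i \<in> I \<Longrightarrow> j \<in> I \<Longrightarrow>
                 K u * K u * MY (b i) (b j) u \<le> MX (a i) (a j) u"
    and K_YX: "\<And>u i j. 0 < u \<Longrightarrow> i \<in> I \<Longrightarrow> j \<in> I \<Longrightarrow>
                 K u * K u * MX (a i) (a j) u \<le> MY (b i) (b j) u"
begin

definition cross :: "'a \<Rightarrow> 'b \<Rightarrow> real \<Rightarrow> real" where
  "cross x y t = Max ((\<lambda>i. MX x (a i) t * K t * MY y (b i) t) ` I)"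

sublocale swap: fuzzy_gluing Y MY X MX I b a K
  using fmX naX fmY naY finite_I I_nonempty a_in b_in K_nonneg K_le_1 K_mono K_left_continuous
    K_less_1 K_XY K_YX by unfold_locales

(* Not a simp rule: swap.swap is the original instance, so swap.cross_swap is its inverse. *)
lemma cross_swap: "swap.cross y x t = cross x y t"
  unfolding cross_def swap.cross_def by (simp add: mult_ac)

lemma cross_ge: "i \<in> I \<Longrightarrow> MX x (a i) t * K t * MY y (b i) t \<le> cross x y t"
  unfolding cross_def using finite_I by (intro Max_ge) auto

lemma cross_attained:
  obtains i where "i \<in> I" "cross x y t = MX x (a i) t * K t * MY y (b i) t"
proof -
  have "cross x y t \<in> (\<lambda>i. MX x (a i) t * K t * MY y (b i) t) ` I"
    unfolding cross_def using finite_I I_nonempty by (intro Max_in) auto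
  then show ?thesis using that by blast
qed

lemma cross_nonneg: "x \<in> X \<Longrightarrow> y \<in> Y \<Longrightarrow> 0 \<le> t \<Longrightarrow> 0 \<le> cross x y t"
  by (rule cross_attained[of x y t])
    (simp add: K_nonneg a_in b_in fuzzy_metric_nonneg[OF fmX] fuzzy_metric_nonneg[OF fmY])

lemma cross_le_K: "x \<in> X \<Longrightarrow> y \<in> Y \<Longrightarrow> 0 \<le> t \<Longrightarrow> cross x y t \<le> K t"
proof (rule cross_attained[of x y t])
  fix i assume x: "x \<in> X" and y: "y \<in> Y" and t: "0 \<le> t" and i: "i \<in> I"
  have "MX x (a i) t * K t * MY y (b i) t \<le> 1 * K t * 1"
    using x y t a_in[OF i] b_in[OF i] K_nonneg
    by (intro mult_mono) (auto simp: fuzzy_metric_nonneg[OF fmX] fuzzy_metric_le_1[OF fmX]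
        fuzzy_metric_nonneg[OF fmY] fuzzy_metric_le_1[OF fmY])
  then show "cross x y t = MX x (a i) t * K t * MY y (b i) t \<Longrightarrow> cross x y t \<le> K t" by simp
qed

lemma cross_le_1: "x \<in> X \<Longrightarrow> y \<in> Y \<Longrightarrow> 0 \<le> t \<Longrightarrow> cross x y t \<le> 1"
  using cross_le_K K_le_1[of t] by fastforce

lemma cross_not_1:
  assumes "x \<in> X" "y \<in> Y"
  shows "\<not> (\<forall>t>0. cross x y t = 1)"
proof -
  obtain s where "0 < s" "K s < 1" using K_less_1 by blast
  with cross_le_K[OF assms, of s] show ?thesis by auto
qed

lemma cross_at_0: "x \<in> X \<Longrightarrow> cross x y 0 = 0"
  by (rule cross_attained[of x y 0]) (simp add: a_in fuzzy_metric_at_0[OF fmX])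

lemma cross_left_continuous:
  assumes "x \<in> X" "y \<in> Y" "0 < t"
  shows "(cross x y \<longlongrightarrow> cross x y t) (at_left t)"
proof -
  have "((\<lambda>s. MX x (a i) s * K s * MY y (b i) s) \<longlongrightarrow> MX x (a i) t * K t * MY y (b i) t) (at_left t)"
    if "i \<in> I" for i
    using assms a_in[OF that] b_in[OF that]
    by (intro tendsto_mult K_left_continuous fuzzy_metric_left_continuous[OF fmX]
        fuzzy_metric_left_continuous[OF fmY])
  then show ?thesis
    unfolding cross_def[abs_def] by (intro tendsto_Max_finite finite_I I_nonempty)
qed

lemma cross_mono_left:
  assumes x: "x \<in> X" "x' \<in> X" and y: "y \<in> Y" and ts: "0 < t" "0 < s"
  shows "MX x x' t * cross x' y s \<le> cross x y (max t s)"
proof (rule cross_attained[of x' y s])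
  fix i assume i: "i \<in> I" and cross_eq: "cross x' y s = MX x' (a i) s * K s * MY y (b i) s"
  let ?u = "max t s"
  have "MX x x' t * cross x' y s = (MX x x' t * MX x' (a i) s) * (K s * MY y (b i) s)"
    by (simp add: cross_eq mult_ac)
  also have "\<dots> \<le> MX x (a i) ?u * (K ?u * MY y (b i) ?u)"
    using x y ts a_in[OF i] b_in[OF i] K_nonneg
    by (intro mult_mono non_archimedeanD[OF naX] K_mono fuzzy_non_archimedean_mono[OF fmY naY])
      (auto simp: fuzzy_metric_nonneg[OF fmX] fuzzy_metric_nonneg[OF fmY])
  also have "\<dots> \<le> cross x y ?u"
    using cross_ge[OF i, of x ?u y] by (simp add: mult_ac)
  finally show ?thesis .
qed

lemma cross_cross_le_left:
  assumes x: "x \<in> X" "x' \<in> X" and y: "y \<in> Y" and ts: "0 < t" "0 < s"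
  shows "cross x y t * cross x' y s \<le> MX x x' (max t s)"
proof -
  let ?u = "max t s"
  have u: "0 < ?u" using ts by simp
  obtain i where i: "i \<in> I" and cross_i: "cross x y t = MX x (a i) t * K t * MY y (b i) t"
    using cross_attained by blast
  obtain j where j: "j \<in> I" and cross_j: "cross x' y s = MX (a j) x' s * K s * MY y (b j) s"
    using cross_attained[of x' y s] fuzzy_metric_commute[OF fmX x(2) a_in] ts
    by (metis less_imp_le)
  note in_X = x a_in[OF i] a_in[OF j] and in_Y = y b_in[OF i] b_in[OF j]
  note nonneg = K_nonneg fuzzy_metric_nonneg[OF fmX] fuzzy_metric_nonneg[OF fmY]
  have "cross x y t * cross x' y s
      = MX x (a i) t * (K t * K s * (MY (b i) y t * MY y (b j) s)) * MX (a j) x' s"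
    using fuzzy_metric_commute[OF fmY y b_in[OF i]] ts by (simp add: cross_i cross_j mult_ac)
  also have "\<dots> \<le> MX x (a i) t * (K ?u * K ?u * MY (b i) (b j) ?u) * MX (a j) x' s"
    using in_X in_Y ts
    by (intro mult_right_mono mult_left_mono mult_mono K_mono non_archimedeanD[OF naY])
      (auto simp: nonneg)
  also have "\<dots> \<le> MX x (a i) t * MX (a i) (a j) ?u * MX (a j) x' s"
    using in_X ts u by (intro mult_right_mono mult_left_mono K_XY i j) (auto simp: nonneg)
  also have "\<dots> \<le> MX x (a j) ?u * MX (a j) x' s"
    using non_archimedeanD[OF naX x(1) a_in[OF i] a_in[OF j] ts(1) u] in_X ts
    by (intro mult_right_mono) (auto simp: nonneg)
  also have "\<dots> \<le> MX x x' ?u"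
    using non_archimedeanD[OF naX x(1) a_in[OF j] x(2) u ts(2)] by simp
  finally show ?thesis .
qed

end

(* Re-entering the locale makes the lemmas above available for the swapped instance. *)
context fuzzy_gluing
begin

lemma cross_mono_right:
  assumes "x \<in> X" "y \<in> Y" "y' \<in> Y" "0 < t" "0 < s"
  shows "cross x y t * MY y y' s \<le> cross x y' (max t s)"
  using swap.cross_mono_left[OF assms(3,2,1,5,4)] fuzzy_metric_commute[OF fmY assms(3,2)] assms(5)
  by (simp add: cross_swap max.commute mult.commute)

lemma cross_cross_le_right:
  "x \<in> X \<Longrightarrow> y \<in> Y \<Longrightarrow> y' \<in> Y \<Longrightarrow> 0 < t \<Longrightarrow> 0 < s \<Longrightarrow>
    cross x y t * cross x y' s \<le> MY y y' (max t s)"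
  using swap.cross_cross_le_left[of y y' x t s] by (simp add: cross_swap)

definition glued :: "'a + 'b \<Rightarrow> 'a + 'b \<Rightarrow> real \<Rightarrow> real" where
  "glued p q t = (case (p, q) of
      (Inl x, Inl x') \<Rightarrow> MX x x' t | (Inr y, Inr y') \<Rightarrow> MY y y' t
    | (Inl x, Inr y) \<Rightarrow> cross x y t | (Inr y, Inl x) \<Rightarrow> cross x y t)"

lemma glued_simps [simp]:
  "glued (Inl x) (Inl x') = MX x x'" "glued (Inr y) (Inr y') = MY y y'"
  "glued (Inl x) (Inr y) = cross x y" "glued (Inr y) (Inl x) = cross x y"
  by (simp_all add: glued_def[abs_def])

lemma glued_non_archimedean: "non_archimedean (Inl ` X \<union> Inr ` Y) glued"
  unfolding non_archimedean_def
proof (intro ballI allI impI)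
  fix p q r and t s :: real
  assume p: "p \<in> Inl ` X \<union> Inr ` Y" and q: "q \<in> Inl ` X \<union> Inr ` Y"
    and r: "r \<in> Inl ` X \<union> Inr ` Y" and ts: "0 < t" "0 < s"
  have commuted: "cross x y t * MX x x' s \<le> cross x' y (max t s)"
    "MY y y' t * cross x y' s \<le> cross x y (max t s)"
    if "x \<in> X" "x' \<in> X" "y \<in> Y" "y' \<in> Y" for x x' y y'
    using cross_mono_left[of x' x y s t] cross_mono_right[of x y' y s t] that ts
      fuzzy_metric_commute[OF fmX, of x x' s] fuzzy_metric_commute[OF fmY, of y y' t]
    by (simp_all add: max.commute mult.commute)
  from p q r show "glued p q t * glued q r s \<le> glued p r (max t s)"
    using ts by (auto intro: non_archimedeanD[OF naX] non_archimedeanD[OF naY] commuted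
        cross_mono_left cross_mono_right cross_cross_le_left cross_cross_le_right)
qed

lemma glued_admissible: "admissible X MX Y MY glued"
proof -
  let ?U = "Inl ` X \<union> Inr ` Y"
  have self: "glued p p t = 1" if "p \<in> ?U" "0 < t" for p t
    using that fuzzy_metric_self[OF fmX] fuzzy_metric_self[OF fmY] by auto
  have eq_1_iff: "(\<forall>t>0. glued p q t = 1) \<longleftrightarrow> p = q" if "p \<in> ?U" "q \<in> ?U" for p q
    using that
    by (auto simp: fuzzy_metric_eq_1_iff[OF fmX] fuzzy_metric_eq_1_iff[OF fmY] cross_not_1
        fuzzy_metric_self[OF fmX] fuzzy_metric_self[OF fmY])
  have "fuzzy_metric ?U glued"
    unfolding fuzzy_metric_def
  proof (intro conjI ballI allI impI)
    fix p q r and t s :: real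
    assume p: "p \<in> ?U" and q: "q \<in> ?U"
    show "(\<forall>t>0. glued p q t = 1) \<longleftrightarrow> p = q" by (rule eq_1_iff[OF p q])
    show "glued p q 0 = 0"
      using p q by (auto simp: cross_at_0 fuzzy_metric_at_0[OF fmX] fuzzy_metric_at_0[OF fmY])
    { assume "0 \<le> t"
      with p q show "0 \<le> glued p q t" "glued p q t \<le> 1" "glued p q t = glued q p t"
        by (auto simp: cross_nonneg cross_le_1
            fuzzy_metric_nonneg[OF fmX] fuzzy_metric_nonneg[OF fmY]
            fuzzy_metric_le_1[OF fmX] fuzzy_metric_le_1[OF fmY]
            fuzzy_metric_commute[OF fmX] fuzzy_metric_commute[OF fmY]) }
    { assume "0 < t"
      with p q show "(glued p q \<longlongrightarrow> glued p q t) (at_left t)"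
        by (auto simp: cross_left_continuous
            fuzzy_metric_left_continuous[OF fmX] fuzzy_metric_left_continuous[OF fmY]) }
    { assume "r \<in> ?U" "0 < t" "0 < s"
      with p q show "glued p q t * glued q r s \<le> glued p r (t + s)"
        by (intro non_archimedean_triangle[OF glued_non_archimedean self]) }
  qed
  then show ?thesis
    unfolding admissible_def using glued_non_archimedean by simp
qed

lemma MGH_ge_gluing:
  assumes "0 < s"
    and X_net: "\<And>x. x \<in> X \<Longrightarrow> \<exists>i\<in>I. c \<le> MX x (a i) s"
    and Y_net: "\<And>y. y \<in> Y \<Longrightarrow> \<exists>i\<in>I. c \<le> MY y (b i) s"
  shows "c * K s \<le> MGH X MX Y MY s"
proof -
  obtain i0 where i0: "i0 \<in> I" using I_nonempty by blast
  have "c * K s \<le> HM glued (Inl ` X) (Inr ` Y) s"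
  proof (rule HM_geI)
    show "Inl ` X \<noteq> {}" "Inr ` Y \<noteq> {}" using a_in[OF i0] b_in[OF i0] by auto
    show "glued p q s \<le> 1" if "p \<in> Inl ` X" "q \<in> Inr ` Y" for p q
      using that assms(1) by (auto simp: cross_le_1)
    show "\<exists>q\<in>Inr ` Y. c * K s \<le> glued p q s" if p: "p \<in> Inl ` X" for p
    proof -
      obtain x where x: "x \<in> X" "p = Inl x" using p by blast
      then obtain i where i: "i \<in> I" "c \<le> MX x (a i) s" using X_net by blast
      have "c * K s \<le> MX x (a i) s * K s * MY (b i) (b i) s"
        using i fuzzy_metric_self[OF fmY b_in[OF i(1)] assms(1)] K_nonneg
        by (simp add: mult_right_mono)
      also have "\<dots> \<le> cross x (b i) s" by (rule cross_ge[OF i(1)])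
      finally show ?thesis using x b_in[OF i(1)] by auto
    qed
    show "\<exists>p\<in>Inl ` X. c * K s \<le> glued p q s" if q: "q \<in> Inr ` Y" for q
    proof -
      obtain y where y: "y \<in> Y" "q = Inr y" using q by blast
      then obtain i where i: "i \<in> I" "c \<le> MY y (b i) s" using Y_net by blast
      have "c * K s \<le> MX (a i) (a i) s * K s * MY y (b i) s"
        using mult_right_mono[OF i(2) K_nonneg[of s]] fuzzy_metric_self[OF fmX a_in[OF i(1)] assms(1)]
        by (simp add: mult.commute)
      also have "\<dots> \<le> cross (a i) y s" by (rule cross_ge[OF i(1)])
      finally show ?thesis using y a_in[OF i(1)] by auto
    qed
  qed
  also have "\<dots> \<le> MGH X MX Y MY s"
    using a_in[OF i0] b_in[OF i0] assms(1) by (intro HM_le_MGH glued_admissible) auto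
  finally show ?thesis .
qed

end

lemma subseq_uniformly_comparable:
  fixes P :: "nat \<Rightarrow> 'i \<Rightarrow> real"
  assumes "finite I" "0 < c" "\<theta> < 1"
    and range: "\<And>n i. i \<in> I \<Longrightarrow> c \<le> P n i \<and> P n i \<le> 1"
  shows "\<exists>r :: nat \<Rightarrow> nat. strict_mono r \<and> (\<forall>j k. \<forall>i\<in>I. \<theta> * P (r k) i \<le> P (r j) i)"
proof -
  define h where "h = (1 - \<theta>) * c"
  have h: "0 < h" using assms(2,3) by (simp add: h_def)
  define cell where "cell n = (\<lambda>i\<in>I. \<lfloor>P n i / h\<rfloor>)" for n
  have cell_in: "cell n \<in> (\<Pi>\<^sub>E i\<in>I. {0..\<lceil>1 / h\<rceil>})" for n
  proof -
    have "0 \<le> \<lfloor>P n i / h\<rfloor> \<and> \<lfloor>P n i / h\<rfloor> \<le> \<lceil>1 / h\<rceil>" if "i \<in> I" for i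
    proof -
      have "0 \<le> P n i / h" "P n i / h \<le> 1 / h"
        using range[OF that, of n] assms(2) h by (auto simp: divide_right_mono)
      then show ?thesis using order.trans[OF floor_mono floor_le_ceiling] by simp
    qed
    then show ?thesis unfolding cell_def by auto
  qed
  have "finite (range cell)"
    by (rule finite_subset[where B = "\<Pi>\<^sub>E i\<in>I. {0..\<lceil>1 / h\<rceil>}"])
      (use cell_in assms(1) in \<open>auto intro: finite_PiE\<close>)
  then obtain n0 where fiber: "infinite {n. cell n = cell n0}"
    using pigeonhole_infinite[OF infinite_UNIV_nat] by auto
  define r where "r = enumerate {n. cell n = cell n0}"
  have same_cell: "cell (r j) = cell (r k)" for j k
    using enumerate_in_set[OF fiber] by (simp add: r_def)
  have comparable: "\<theta> * P m i \<le> P n i" if "cell n = cell m" "i \<in> I" for n m i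
  proof -
    have "\<lfloor>P n i / h\<rfloor> = \<lfloor>P m i / h\<rfloor>"
      using fun_cong[OF that(1), of i] that(2) by (simp add: cell_def)
    then have "P m i / h < P n i / h + 1" by linarith
    then have "P m i < P n i + h" using h by (simp add: field_simps)
    moreover have "h \<le> (1 - \<theta>) * P m i"
      unfolding h_def using range[OF that(2), of m] assms(3) by (intro mult_left_mono) auto
    ultimately show ?thesis by (simp add: algebra_simps)
  qed
  have "strict_mono r" unfolding r_def by (rule strict_mono_enumerate[OF fiber])
  moreover have "\<forall>j k. \<forall>i\<in>I. \<theta> * P (r k) i \<le> P (r j) i"
    using comparable same_cell by blast
  ultimately show ?thesis by blast
qed

(* Up to \<tau> the diameter bound C has to control the gluing; beyond \<tau> the ratio condition
   does, which permits the constant \<kappa>. *)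
definition gauge :: "real \<Rightarrow> (real \<Rightarrow> real) \<Rightarrow> real \<Rightarrow> real \<Rightarrow> real" where
  "gauge \<kappa> C \<tau> s = (if s \<le> 0 then 0 else if s \<le> \<tau> then \<kappa> * C s else \<kappa>)"

context
  fixes \<kappa> :: real and C :: "real \<Rightarrow> real" and \<tau> :: real
  assumes \<tau>: "0 < \<tau>" and \<kappa>: "0 \<le> \<kappa>" "\<kappa> \<le> 1" and C_bounds: "\<And>s. 0 < s \<Longrightarrow> 0 < C s \<and> C s \<le> 1"
begin

lemma gauge_nonneg: "0 \<le> gauge \<kappa> C \<tau> s"
  using \<kappa> C_bounds[of s] by (auto simp: gauge_def not_le)

lemma gauge_le_kappa: "gauge \<kappa> C \<tau> s \<le> \<kappa>"
  using \<kappa> C_bounds[of s] mult_left_mono[of "C s" 1 \<kappa>] by (auto simp: gauge_def)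

lemma gauge_le_C: "0 < s \<Longrightarrow> s \<le> \<tau> \<Longrightarrow> gauge \<kappa> C \<tau> s \<le> C s"
  using \<kappa> C_bounds[of s] mult_right_mono[of \<kappa> 1 "C s"] by (simp add: gauge_def)

lemma gauge_mono:
  assumes "\<And>s u. 0 < s \<Longrightarrow> s \<le> u \<Longrightarrow> C s \<le> C u" "0 < s" "s \<le> u"
  shows "gauge \<kappa> C \<tau> s \<le> gauge \<kappa> C \<tau> u"
  using assms(1)[OF assms(2,3)] gauge_le_kappa[of s] assms(2,3) \<kappa>
  by (auto simp: gauge_def intro: mult_left_mono)

lemma gauge_left_continuous:
  assumes C_left_continuous: "\<And>s. 0 < s \<Longrightarrow> (C \<longlongrightarrow> C s) (at_left s)" and "0 < s"
  shows "(gauge \<kappa> C \<tau> \<longlongrightarrow> gauge \<kappa> C \<tau> s) (at_left s)"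
proof (cases "s \<le> \<tau>")
  case True
  have "eventually (\<lambda>u. \<kappa> * C u = gauge \<kappa> C \<tau> u) (at_left s)"
    using eventually_at_left_real[OF \<open>0 < s\<close>] by eventually_elim (use True in \<open>auto simp: gauge_def\<close>)
  moreover have "((\<lambda>u. \<kappa> * C u) \<longlongrightarrow> \<kappa> * C s) (at_left s)"
    by (intro tendsto_mult tendsto_const C_left_continuous \<open>0 < s\<close>)
  ultimately have "(gauge \<kappa> C \<tau> \<longlongrightarrow> \<kappa> * C s) (at_left s)"
    by (rule tendsto_cong[THEN iffD1])
  moreover have "gauge \<kappa> C \<tau> s = \<kappa> * C s" using True \<open>0 < s\<close> by (simp add: gauge_def)
  ultimately show ?thesis by simp
next
  case False
  then have "\<tau> < s" by simp
  have "eventually (\<lambda>u. \<kappa> = gauge \<kappa> C \<tau> u) (at_left s)"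
    using eventually_at_left_real[OF \<open>\<tau> < s\<close>]
    by eventually_elim (use \<tau> in \<open>auto simp: gauge_def\<close>)
  then have "(gauge \<kappa> C \<tau> \<longlongrightarrow> \<kappa>) (at_left s)"
    by (rule tendsto_cong[THEN iffD1]) simp
  moreover have "gauge \<kappa> C \<tau> s = \<kappa>" using False \<open>0 < s\<close> by (simp add: gauge_def)
  ultimately show ?thesis by simp
qed

lemma gauge_comparison:
  fixes p q :: "real \<Rightarrow> real"
  assumes p_ge_C: "\<And>s. 0 < s \<Longrightarrow> C s \<le> p s"
    and q_ge_C: "\<And>s. 0 < s \<Longrightarrow> C s \<le> q s" and q_le_1: "\<And>s. 0 < s \<Longrightarrow> q s \<le> 1"
    and at_\<tau>: "\<kappa>\<^sup>2 * q \<tau> \<le> p \<tau>"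
    and ratio: "\<tau> < u \<Longrightarrow> p u < q u \<Longrightarrow> p \<tau> / q \<tau> \<le> p u / q u"
    and "0 < u"
  shows "gauge \<kappa> C \<tau> u * gauge \<kappa> C \<tau> u * q u \<le> p u"
proof (cases "u \<le> \<tau>")
  case True
  have "gauge \<kappa> C \<tau> u * gauge \<kappa> C \<tau> u * q u \<le> gauge \<kappa> C \<tau> u * 1 * 1"
    using gauge_nonneg[of u] gauge_le_kappa[of u] q_ge_C[OF \<open>0 < u\<close>] q_le_1[OF \<open>0 < u\<close>]
      C_bounds[OF \<open>0 < u\<close>] \<kappa> by (intro mult_mono) auto
  also have "\<dots> \<le> p u"
    using gauge_le_C[OF \<open>0 < u\<close> True] p_ge_C[OF \<open>0 < u\<close>] by simp
  finally show ?thesis .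
next
  case False
  have q_pos: "0 < q s" if "0 < s" for s using C_bounds[OF that] q_ge_C[OF that] by linarith
  have "\<kappa>\<^sup>2 * q u \<le> p u"
  proof (cases "p u < q u")
    case True
    have "\<kappa>\<^sup>2 \<le> p \<tau> / q \<tau>" using at_\<tau> q_pos[OF \<tau>] by (simp add: field_simps)
    also have "\<dots> \<le> p u / q u" using ratio False True by simp
    finally show ?thesis using q_pos[OF \<open>0 < u\<close>] by (simp add: field_simps)
  next
    case False
    have "\<kappa>\<^sup>2 * q u \<le> 1 * q u"
      using \<kappa> q_pos[OF \<open>0 < u\<close>] by (intro mult_right_mono) (auto simp: power_le_one)
    with False show ?thesis by simp
  qed
  then show ?thesis using False \<open>0 < u\<close> by (simp add: gauge_def power2_eq_square)
qed

end

lemma MGH_ge_comparable_nets: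
  fixes a :: "nat \<Rightarrow> 'a" and b :: "nat \<Rightarrow> 'b"
  assumes X: "fuzzy_metric X MX" "non_archimedean X MX" "X \<noteq> {}"
    and Y: "fuzzy_metric Y MY" "non_archimedean Y MY"
    and nets: "is_net X MX a N t0 \<epsilon>" "is_net Y MY b N t0 \<epsilon>"
    and C_mono: "\<And>s u. 0 < s \<Longrightarrow> s \<le> u \<Longrightarrow> C s \<le> C u"
    and C_left_continuous: "\<And>s. 0 < s \<Longrightarrow> (C \<longlongrightarrow> C s) (at_left s)"
    and C_bounds: "\<And>s. 0 < s \<Longrightarrow> 0 < C s \<and> C s \<le> 1"
    and C_le_X: "\<And>s x x'. 0 < s \<Longrightarrow> x \<in> X \<Longrightarrow> x' \<in> X \<Longrightarrow> C s \<le> MX x x' s"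
    and C_le_Y: "\<And>s y y'. 0 < s \<Longrightarrow> y \<in> Y \<Longrightarrow> y' \<in> Y \<Longrightarrow> C s \<le> MY y y' s"
    and \<kappa>: "0 \<le> \<kappa>" "\<kappa> < 1"
    and at_t0_XY: "\<And>i j. i \<in> {1..N} \<Longrightarrow> j \<in> {1..N} \<Longrightarrow>
                  \<kappa>\<^sup>2 * MY (b i) (b j) t0 \<le> MX (a i) (a j) t0"
    and at_t0_YX: "\<And>i j. i \<in> {1..N} \<Longrightarrow> j \<in> {1..N} \<Longrightarrow>
                  \<kappa>\<^sup>2 * MX (a i) (a j) t0 \<le> MY (b i) (b j) t0"
    and ratio_XY: "\<And>s i j. t0 < s \<Longrightarrow> i \<in> {1..N} \<Longrightarrow> j \<in> {1..N} \<Longrightarrow>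
                  MX (a i) (a j) s < MY (b i) (b j) s \<Longrightarrow>
                  MX (a i) (a j) t0 / MY (b i) (b j) t0 \<le> MX (a i) (a j) s / MY (b i) (b j) s"
    and ratio_YX: "\<And>s i j. t0 < s \<Longrightarrow> i \<in> {1..N} \<Longrightarrow> j \<in> {1..N} \<Longrightarrow>
                  MY (b i) (b j) s < MX (a i) (a j) s \<Longrightarrow>
                  MY (b i) (b j) t0 / MX (a i) (a j) t0 \<le> MY (b i) (b j) s / MX (a i) (a j) s"
    and "0 < t0" "t0 < s"
  shows "(1 - \<epsilon>) * \<kappa> \<le> MGH X MX Y MY s"
proof -
  let ?K = "gauge \<kappa> C t0"
  have \<kappa>_le_1: "\<kappa> \<le> 1" using \<kappa> by simp
  have a_in: "a i \<in> X" and b_in: "b i \<in> Y" if "i \<in> {1..N}" for i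
    using nets that unfolding is_net_def by auto
  obtain x0 where "x0 \<in> X" using X(3) by blast
  then have "{1..N} \<noteq> {}" using nets(1) unfolding is_net_def by blast
  note gauge_assms = \<open>0 < t0\<close> \<kappa>(1) \<kappa>_le_1 C_bounds
  interpret fuzzy_gluing X MX Y MY "{1..N}" a b ?K
  proof unfold_locales
    fix s u :: real and i j
    show "0 \<le> ?K s" by (rule gauge_nonneg[where C = C, OF gauge_assms])
    show "?K s \<le> 1" using gauge_le_kappa[where C = C, OF gauge_assms, of s] \<kappa>_le_1 by linarith
    show "0 < s \<Longrightarrow> s \<le> u \<Longrightarrow> ?K s \<le> ?K u" by (rule gauge_mono[where C = C, OF gauge_assms C_mono])
    show "0 < s \<Longrightarrow> (?K \<longlongrightarrow> ?K s) (at_left s)"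
      by (rule gauge_left_continuous[where C = C, OF gauge_assms C_left_continuous])
    show "\<exists>s>0. ?K s < 1"
      using \<kappa> \<open>0 < t0\<close> by (intro exI[of _ "t0 + 1"]) (simp add: gauge_def)
    assume "0 < u" and ij: "i \<in> {1..N}" "j \<in> {1..N}"
    show "?K u * ?K u * MY (b i) (b j) u \<le> MX (a i) (a j) u"
      by (rule gauge_comparison[where C = C, OF gauge_assms])
        (use \<open>0 < u\<close> ij a_in b_in C_le_X C_le_Y at_t0_XY ratio_XY fuzzy_metric_le_1[OF Y(1)]
          in \<open>simp_all add: less_imp_le\<close>)
    show "?K u * ?K u * MX (a i) (a j) u \<le> MY (b i) (b j) u"
      by (rule gauge_comparison[where C = C, OF gauge_assms])
        (use \<open>0 < u\<close> ij a_in b_in C_le_X C_le_Y at_t0_YX ratio_YX fuzzy_metric_le_1[OF X(1)]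
          in \<open>simp_all add: less_imp_le\<close>)
  qed (use X Y a_in b_in \<open>{1..N} \<noteq> {}\<close> in simp_all)
  have "(1 - \<epsilon>) * ?K s \<le> MGH X MX Y MY s"
  proof (rule MGH_ge_gluing)
    show "0 < s" using \<open>0 < t0\<close> \<open>t0 < s\<close> by simp
    have "is_net X MX a N s \<epsilon>" "is_net Y MY b N s \<epsilon>"
      using is_net_mono[OF X(1,2) nets(1)] is_net_mono[OF Y(1,2) nets(2)] \<open>0 < t0\<close> \<open>t0 < s\<close>
      by simp_all
    then show "\<exists>i\<in>{1..N}. 1 - \<epsilon> \<le> MX x (a i) s" if "x \<in> X" for x
      using that unfolding is_net_def by (meson less_imp_le)
    show "\<exists>i\<in>{1..N}. 1 - \<epsilon> \<le> MY y (b i) s" if "y \<in> Y" for y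
      using \<open>is_net Y MY b N s \<epsilon>\<close> that unfolding is_net_def by (meson less_imp_le)
  qed
  then show ?thesis using \<open>0 < t0\<close> \<open>t0 < s\<close> by (simp add: gauge_def)
qed

lemma subseq_MGH_close:
  fixes X :: "nat \<Rightarrow> 'a set" and M :: "nat \<Rightarrow> 'a \<Rightarrow> 'a \<Rightarrow> real \<Rightarrow> real" and \<sigma> :: "nat \<Rightarrow> nat"
  assumes spaces: "\<And>n. X n \<noteq> {} \<and> fuzzy_metric (X n) (M n) \<and> non_archimedean (X n) (M n)"
    and C_mono: "\<And>s u. 0 < s \<Longrightarrow> s \<le> u \<Longrightarrow> C s \<le> C u"
    and C_left_continuous: "\<And>s. 0 < s \<Longrightarrow> (C \<longlongrightarrow> C s) (at_left s)"
    and C_bounds: "\<And>s. 0 < s \<Longrightarrow> 0 < C s \<and> C s \<le> 1"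
    and C_le_fdiam: "\<And>s n. 0 < s \<Longrightarrow> C s \<le> fdiam (X n) (M n) s"
    and nets: "\<exists>x :: nat \<Rightarrow> nat \<Rightarrow> 'a. (\<forall>n. is_net (X n) (M n) (x n) N t0 \<epsilon>) \<and>
      (\<forall>n m s i j. s > t0 \<longrightarrow> i \<in> {1..N} \<longrightarrow> j \<in> {1..N} \<longrightarrow>
         M n (x n i) (x n j) s < M m (x m i) (x m j) s \<longrightarrow>
         M n (x n i) (x n j) s / M m (x m i) (x m j) s \<ge> M n (x n i) (x n j) t0 / M m (x m i) (x m j) t0)"
    and "0 < t0" "0 < \<epsilon>" "\<epsilon> < 1"
  shows "\<exists>r :: nat \<Rightarrow> nat. strict_mono r \<and> (\<forall>j k. \<forall>s>t0.
           (1 - \<epsilon>)\<^sup>2 < MGH (X (\<sigma> (r j))) (M (\<sigma> (r j))) (X (\<sigma> (r k))) (M (\<sigma> (r k))) s)"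
proof -
  from nets obtain x where x_net: "\<forall>n. is_net (X n) (M n) (x n) N t0 \<epsilon>"
    and x_ratio: "\<forall>n m s i j. s > t0 \<longrightarrow> i \<in> {1..N} \<longrightarrow> j \<in> {1..N} \<longrightarrow>
         M n (x n i) (x n j) s < M m (x m i) (x m j) s \<longrightarrow>
         M n (x n i) (x n j) s / M m (x m i) (x m j) s \<ge> M n (x n i) (x n j) t0 / M m (x m i) (x m j) t0"
    by blast
  define \<kappa> where "\<kappa> = 1 - \<epsilon> / 2"
  have \<kappa>: "0 \<le> \<kappa>" "\<kappa> < 1" "(1 - \<epsilon>)\<^sup>2 < (1 - \<epsilon>) * \<kappa>"
    using \<open>0 < \<epsilon>\<close> \<open>\<epsilon> < 1\<close> by (auto simp: \<kappa>_def power2_eq_square)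
  have C_le: "C s \<le> M n p q s" if "0 < s" "p \<in> X n" "q \<in> X n" for s n p q
    using C_le_fdiam[OF that(1), of n] fdiam_le[of "X n" "M n" p q s] spaces that by force
  have x_in: "x n i \<in> X n" if "i \<in> {1..N}" for n i
    using x_net that unfolding is_net_def by blast
  have values_range: "C t0 \<le> M n (x n i) (x n i') t0 \<and> M n (x n i) (x n i') t0 \<le> 1"
    if "i \<in> {1..N}" "i' \<in> {1..N}" for n i i'
    using C_le[OF \<open>0 < t0\<close> x_in[OF that(1)] x_in[OF that(2)]] spaces \<open>0 < t0\<close>
      fuzzy_metric_le_1[of "X n" "M n", OF _ x_in[OF that(1)] x_in[OF that(2)]] by simp
  let ?P = "\<lambda>n (i, i'). M (\<sigma> n) (x (\<sigma> n) i) (x (\<sigma> n) i') t0"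
  obtain r :: "nat \<Rightarrow> nat" where r: "strict_mono r"
    and comparable: "\<forall>j k. \<forall>ii' \<in> {1..N} \<times> {1..N}. \<kappa>\<^sup>2 * ?P (r k) ii' \<le> ?P (r j) ii'"
    using C_bounds[OF \<open>0 < t0\<close>] \<kappa> values_range
    by (atomize_elim, intro subseq_uniformly_comparable) (auto simp: power_less_one_iff)
  have "(1 - \<epsilon>) * \<kappa> \<le> MGH (X (\<sigma> (r j))) (M (\<sigma> (r j))) (X (\<sigma> (r k))) (M (\<sigma> (r k))) s"
    if "t0 < s" for j k s
    using spaces x_net C_mono C_left_continuous C_bounds C_le \<kappa>(1,2) comparable x_ratio \<open>0 < t0\<close> that
    by (intro MGH_ge_comparable_nets[where C = C]) auto
  with \<kappa>(3) r show ?thesis by (meson less_le_trans)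
qed

lemma GH_Cauchy_subseq:
  fixes X :: "nat \<Rightarrow> 'a set" and M :: "nat \<Rightarrow> 'a \<Rightarrow> 'a \<Rightarrow> real \<Rightarrow> real"
  assumes close: "\<And>s t0 \<epsilon>. strict_mono s \<Longrightarrow> 0 < t0 \<Longrightarrow> 0 < \<epsilon> \<Longrightarrow> \<epsilon> < 1 \<Longrightarrow>
      \<exists>r :: nat \<Rightarrow> nat. strict_mono r \<and>
        (\<forall>j k. \<forall>t>t0. (1 - \<epsilon>)\<^sup>2 < MGH (X (s (r j))) (M (s (r j))) (X (s (r k))) (M (s (r k))) t)"
  shows "\<exists>r :: nat \<Rightarrow> nat. strict_mono r \<and> GH_Cauchy (\<lambda>k. X (r k)) (\<lambda>k. M (r k))"
proof -
  define \<delta> :: "nat \<Rightarrow> real" where "\<delta> k = inverse (real k + 2)" for k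
  have \<delta>: "0 < \<delta> k" "\<delta> k < 1" for k by (auto simp: \<delta>_def inverse_less_1_iff)
  define P where "P k s \<longleftrightarrow>
      (\<forall>i j. \<forall>t>\<delta> k. (1 - \<delta> k)\<^sup>2 < MGH (X (s i)) (M (s i)) (X (s j)) (M (s j)) t)" for k and s :: "nat \<Rightarrow> nat"
  interpret diagonal: subseqs P
    by unfold_locales (use close \<delta> in \<open>auto simp: P_def\<close>)
  let ?d = diagonal.diagseq
  have P_diagseq: "P k (?d \<circ> (+) (Suc k))" for k
    by (rule diagonal.diagseq_holds) (auto simp: P_def)
  have "GH_Cauchy (\<lambda>k. X (?d k)) (\<lambda>k. M (?d k))"
    unfolding GH_Cauchy_def
  proof (intro allI impI)
    fix t \<epsilon> :: real assume "0 < t" and \<epsilon>: "0 < \<epsilon> \<and> \<epsilon> < 1"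
    obtain k :: nat where "0 < k" "inverse (real k) < min t (\<epsilon> / 2)"
      using ex_inverse_of_nat_less[of "min t (\<epsilon> / 2)"] \<open>0 < t\<close> \<epsilon> by auto
    moreover have "\<delta> k \<le> inverse (real k)" using \<open>0 < k\<close> by (simp add: \<delta>_def le_imp_inverse_le)
    moreover have "1 - 2 * \<delta> k \<le> (1 - \<delta> k)\<^sup>2" by (simp add: power2_eq_square algebra_simps)
    ultimately have k: "\<delta> k < t" "1 - \<epsilon> < (1 - \<delta> k)\<^sup>2" by linarith+
    have "1 - \<epsilon> < MGH (X (?d n)) (M (?d n)) (X (?d m)) (M (?d m)) t"
      if "Suc k \<le> n" "Suc k \<le> m" for n m
    proof -
      have "(1 - \<delta> k)\<^sup>2 < MGH (X (?d (Suc k + (n - Suc k)))) (M (?d (Suc k + (n - Suc k))))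
          (X (?d (Suc k + (m - Suc k)))) (M (?d (Suc k + (m - Suc k)))) t"
        using P_diagseq[of k] k(1) unfolding P_def by simp
      with k(2) that show ?thesis by simp
    qed
    then show "\<exists>n0. \<forall>n\<ge>n0. \<forall>m\<ge>n0. 1 - \<epsilon> < MGH (X (?d n)) (M (?d n)) (X (?d m)) (M (?d m)) t"
      by blast
  qed
  with diagonal.subseq_diagseq show ?thesis by blast
qed

theorem mainTheorem8:
  fixes X :: "nat \<Rightarrow> 'a set" and M :: "nat \<Rightarrow> 'a \<Rightarrow> 'a \<Rightarrow> real \<Rightarrow> real"
  assumes spaces: "\<And>n. X n \<noteq> {} \<and> fuzzy_metric (X n) (M n) \<and>
                        non_archimedean (X n) (M n) \<and> fcompact (X n) (M n)"
    and cond1: "\<exists>C :: real \<Rightarrow> real.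
          (\<forall>s t. 0 < s \<longrightarrow> s \<le> t \<longrightarrow> C s \<le> C t) \<and>
          (\<forall>s>0. (C \<longlongrightarrow> C s) (at_left s)) \<and>
          (\<forall>s>0. C s \<le> 1) \<and>
          (\<forall>s>0. \<forall>n. 0 < C s \<and> C s \<le> fdiam (X n) (M n) s)"
    and cond23: "\<exists>N :: real \<Rightarrow> real \<Rightarrow> nat.
          (\<forall>t>0. \<forall>\<epsilon>. 0 < \<epsilon> \<and> \<epsilon> < 1 \<longrightarrow> (\<forall>n. fcov (X n) (M n) \<epsilon> t \<le> N \<epsilon> t)) \<and>
          (\<forall>t>0. \<forall>\<epsilon>. 0 < \<epsilon> \<and> \<epsilon> < 1 \<longrightarrow>
             (\<exists>x :: nat \<Rightarrow> nat \<Rightarrow> 'a.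
                (\<forall>n. is_net (X n) (M n) (x n) (N \<epsilon> t) t \<epsilon>) \<and>
                (\<forall>n m s i j. s > t \<longrightarrow> i \<in> {1..N \<epsilon> t} \<longrightarrow> j \<in> {1..N \<epsilon> t} \<longrightarrow>
                   M n (x n i) (x n j) s < M m (x m i) (x m j) s \<longrightarrow>
                   M n (x n i) (x n j) s / M m (x m i) (x m j) s
                     \<ge> M n (x n i) (x n j) t / M m (x m i) (x m j) t)))"
  shows "(\<forall>t>0. \<forall>\<epsilon>. 0 < \<epsilon> \<and> \<epsilon> < 1 \<longrightarrow>
            (\<exists>r :: nat \<Rightarrow> nat. strict_mono r \<and>
               (\<forall>j k. MGH (X (r j)) (M (r j)) (X (r k)) (M (r k)) t > (1 - \<epsilon>)^2)))
       \<and> (\<exists>r :: nat \<Rightarrow> nat. strict_mono r \<and> GH_Cauchy (\<lambda>k. X (r k)) (\<lambda>k. M (r k)))"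
proof -
  from cond1 obtain C where C_mono: "\<forall>s t. 0 < s \<longrightarrow> s \<le> t \<longrightarrow> C s \<le> C t"
    and C_left_continuous: "\<forall>s>0. (C \<longlongrightarrow> C s) (at_left s)" and C_le_1: "\<forall>s>0. C s \<le> 1"
    and C_diam: "\<forall>s>0. \<forall>n. 0 < C s \<and> C s \<le> fdiam (X n) (M n) s"
    by blast
  note nets = conjunct2[OF someI_ex[OF cond23]]
  have close: "\<exists>r :: nat \<Rightarrow> nat. strict_mono r \<and> (\<forall>j k. \<forall>t>t0.
      (1 - \<epsilon>)\<^sup>2 < MGH (X (\<sigma> (r j))) (M (\<sigma> (r j))) (X (\<sigma> (r k))) (M (\<sigma> (r k))) t)"
    if "0 < t0" "0 < \<epsilon>" "\<epsilon> < 1" for \<sigma> :: "nat \<Rightarrow> nat" and t0 \<epsilon>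
    by (rule subseq_MGH_close[where C = C,
          OF _ _ _ _ _ nets[rule_format, OF that(1) conjI[OF that(2,3)]]])
      (use spaces C_mono C_left_continuous C_le_1 C_diam that in simp_all)
  have "\<exists>r :: nat \<Rightarrow> nat. strict_mono r \<and>
      (\<forall>j k. (1 - \<epsilon>)\<^sup>2 < MGH (X (r j)) (M (r j)) (X (r k)) (M (r k)) t)"
    if "0 < t" "0 < \<epsilon>" "\<epsilon> < 1" for t \<epsilon>
    using close[of "t / 2" \<epsilon> id] that by auto
  moreover have "\<exists>r :: nat \<Rightarrow> nat. strict_mono r \<and> GH_Cauchy (\<lambda>k. X (r k)) (\<lambda>k. M (r k))"
    by (rule GH_Cauchy_subseq) (rule close)
  ultimately show ?thesis by auto
qed

end
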